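(* Let $n\geqslant1$, $a,b>0$, $\sigma\in(0,1)\cup(1,+\infty)$, and let $\widehat v(t,\xi)=\frac{\lambda_+e^{\lambda_-t}-\lambda_-e^{\lambda_+t}}{\lambda_+-\lambda_-}\widehat v_0+\frac{e^{\lambda_+t}-e^{\lambda_-t}}{\lambda_+-\lambda_-}\widehat v_1$ with $\lambda_\pm=\frac12\big(-1\pm\sqrt{1-4(a|\xi|^2+b|\xi|^{2\sigma})}\big)$ (the Fourier transform of the solution of $v_{tt}-a\Delta v+b(-\Delta)^\sigma v+v_t=0$, $v(0)=v_0$, $v_t(0)=v_1$). There exist $N_0>0$ sufficiently large and constants $c,C>0$ such that for all $t\geqslant0$ and all $|\xi|\geqslant N_0$: if $\sigma\in(0,1)$ then $|\widehat v|\leqslant Ce^{-ct}(|\widehat v_0|+|\xi|^{-1}|\widehat v_1|)$; if $\sigma\in(1,+\infty)$ then $|\widehat v|\leqslant Ce^{-ct}(|\widehat v_0|+|\xi|^{-\sigma}|\widehat v_1|)$.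
   Context: $(-\Delta)^\sigma$ is the Fourier multiplier with symbol $|\xi|^{2\sigma}$. *)

theory Defs
  imports "HOL-Analysis.Analysis"
begin

definition symb :: "real \<Rightarrow> real \<Rightarrow> real \<Rightarrow> real \<Rightarrow> real" where
  "symb a b \<sigma> r = a * r^2 + b * r powr (2 * \<sigma>)"

definition lam_plus :: "real \<Rightarrow> real \<Rightarrow> real \<Rightarrow> real \<Rightarrow> complex" where
  "lam_plus a b \<sigma> r = (-1 + csqrt (complex_of_real (1 - 4 * symb a b \<sigma> r))) / 2"

definition lam_minus :: "real \<Rightarrow> real \<Rightarrow> real \<Rightarrow> real \<Rightarrow> complex" where
  "lam_minus a b \<sigma> r = (-1 - csqrt (complex_of_real (1 - 4 * symb a b \<sigma> r))) / 2"

text \<open>Fourier transform of the solution at frequency xi (r = |xi|), time t,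
  with data values v0 = hat v_0(xi), v1 = hat v_1(xi).\<close>
definition vhat :: "real \<Rightarrow> real \<Rightarrow> real \<Rightarrow> real \<Rightarrow> real \<Rightarrow> complex \<Rightarrow> complex \<Rightarrow> complex" where
  "vhat a b \<sigma> r t v0 v1 =
     (let lp = lam_plus a b \<sigma> r; lm = lam_minus a b \<sigma> r in
      (lp * exp (lm * t) - lm * exp (lp * t)) / (lp - lm) * v0
      + (exp (lp * t) - exp (lm * t)) / (lp - lm) * v1)"

end

theory Submission
  imports Defs
begin

text \<open>For \<open>|xi| \<ge> 1/sqrt a\<close> the symbol \<open>S = a|xi|^2 + b|xi|^(2 sigma)\<close> is at least 1, so the
  characteristic roots are the complex conjugates \<open>-1/2 \<plusminus> i sqrt(4S - 1)/2\<close>: both decay like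
  \<open>e^(-t/2)\<close>, both have modulus \<open>sqrt S\<close>, and they are separated by \<open>sqrt(4S - 1) \<ge> sqrt(2S)\<close>.
  Hence \<open>|hat v| \<le> sqrt 2 e^(-t/2) (|hat v_0| + |hat v_1| / sqrt S)\<close>, and \<open>sqrt S\<close> dominates both
  \<open>sqrt a |xi|\<close> and \<open>sqrt b |xi|^sigma\<close>. Both estimates therefore hold for every \<open>sigma\<close>; the
  hypotheses on \<open>sigma\<close> only select the sharper one.\<close>

lemma norm_two_root_solution_le:
  fixes lp lm v0 v1 :: complex and c t :: real
  assumes "Re lp \<le> - c" and "Re lm \<le> - c" and "t \<ge> 0"
  shows "cmod ((lp * exp (lm * t) - lm * exp (lp * t)) / (lp - lm) * v0
              + (exp (lp * t) - exp (lm * t)) / (lp - lm) * v1)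
         \<le> exp (- c * t) * ((cmod lp + cmod lm) * cmod v0 + 2 * cmod v1) / cmod (lp - lm)"
proof -
  define E where "E = exp (- c * t)"
  have exp_le: "cmod (exp (l * t)) \<le> E" if "Re l \<le> - c" for l :: complex
    using mult_right_mono[OF that assms(3)] by (simp add: E_def)
  have num0: "cmod (lp * exp (lm * t) - lm * exp (lp * t)) \<le> (cmod lp + cmod lm) * E"
  proof -
    have "cmod (lp * exp (lm * t) - lm * exp (lp * t))
          \<le> cmod lp * cmod (exp (lm * t)) + cmod lm * cmod (exp (lp * t))"
      using norm_triangle_ineq4 by (metis norm_mult)
    also have "\<dots> \<le> cmod lp * E + cmod lm * E"
      using exp_le assms(1,2) by (intro add_mono mult_left_mono) auto
    finally show ?thesis by (simp add: algebra_simps)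
  qed
  have num1: "cmod (exp (lp * t) - exp (lm * t)) \<le> 2 * E"
    using norm_triangle_ineq4[of "exp (lp * t)" "exp (lm * t)"] exp_le[OF assms(1)] exp_le[OF assms(2)]
    by linarith
  have "cmod ((lp * exp (lm * t) - lm * exp (lp * t)) / (lp - lm) * v0
              + (exp (lp * t) - exp (lm * t)) / (lp - lm) * v1)
        \<le> (cmod (lp * exp (lm * t) - lm * exp (lp * t)) * cmod v0
           + cmod (exp (lp * t) - exp (lm * t)) * cmod v1) / cmod (lp - lm)"
    by (rule order_trans[OF norm_triangle_ineq]) (simp add: norm_mult norm_divide add_divide_distrib)
  also have "\<dots> \<le> ((cmod lp + cmod lm) * E * cmod v0 + 2 * E * cmod v1) / cmod (lp - lm)"
    using num0 num1 by (intro divide_right_mono add_mono mult_right_mono) auto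
  finally show ?thesis by (simp add: E_def algebra_simps)
qed

lemma lam_plus_underdamped:
  assumes "symb a b \<sigma> r \<ge> 1/4"
  shows "lam_plus a b \<sigma> r = (-1 + \<i> * sqrt (4 * symb a b \<sigma> r - 1)) / 2"
  using assms by (simp add: lam_plus_def)

lemma lam_minus_underdamped:
  assumes "symb a b \<sigma> r \<ge> 1/4"
  shows "lam_minus a b \<sigma> r = (-1 - \<i> * sqrt (4 * symb a b \<sigma> r - 1)) / 2"
  using assms by (simp add: lam_minus_def)

lemma norm_lam_plus_minus_diff:
  "cmod (lam_plus a b \<sigma> r - lam_minus a b \<sigma> r) = sqrt \<bar>1 - 4 * symb a b \<sigma> r\<bar>"
proof -
  have "lam_plus a b \<sigma> r - lam_minus a b \<sigma> r = csqrt (complex_of_real (1 - 4 * symb a b \<sigma> r))"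
    by (simp add: lam_plus_def lam_minus_def field_simps)
  then show ?thesis
    by (simp only: norm_csqrt norm_of_real)
qed

lemma norm_vhat_le:
  assumes "symb a b \<sigma> r \<ge> 1/2" and "t \<ge> 0"
  shows "cmod (vhat a b \<sigma> r t v0 v1)
         \<le> sqrt 2 * exp (- (1/2) * t) * (cmod v0 + cmod v1 / sqrt (symb a b \<sigma> r))"
proof -
  define S where "S = symb a b \<sigma> r"
  define w where "w = sqrt (4 * S - 1)"
  have S_pos: "S > 0"
    using assms(1) by (simp add: S_def)
  have w2: "w\<^sup>2 = 4 * S - 1" and w_ge: "sqrt 2 * sqrt S \<le> w"
    using assms(1) by (simp_all add: S_def w_def flip: real_sqrt_mult)
  have w_pos: "w > 0"
    using S_pos by (intro order.strict_trans2[OF _ w_ge]) simp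
  have lp: "lam_plus a b \<sigma> r = (-1 + \<i> * w) / 2" and lm: "lam_minus a b \<sigma> r = (-1 - \<i> * w) / 2"
    using assms(1) lam_plus_underdamped lam_minus_underdamped by (simp_all add: S_def w_def)
  have Re_roots: "Re (lam_plus a b \<sigma> r) \<le> - (1/2)" "Re (lam_minus a b \<sigma> r) \<le> - (1/2)"
    by (simp_all add: lp lm)
  have norm_roots: "cmod (lam_plus a b \<sigma> r) = sqrt S" "cmod (lam_minus a b \<sigma> r) = sqrt S"
    using w2 by (simp_all add: lp lm cmod_def power_divide field_simps)
  have norm_diff: "cmod (lam_plus a b \<sigma> r - lam_minus a b \<sigma> r) = w"
    using norm_lam_plus_minus_diff[of a b \<sigma> r] assms(1) by (simp add: S_def w_def)
  have "cmod (vhat a b \<sigma> r t v0 v1)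
        \<le> exp (- (1/2) * t) * ((sqrt S + sqrt S) * cmod v0 + 2 * cmod v1) / w"
    using norm_two_root_solution_le[OF Re_roots assms(2), of v0 v1]
    unfolding vhat_def Let_def norm_roots norm_diff .
  also have "\<dots> \<le> exp (- (1/2) * t) * ((sqrt S + sqrt S) * cmod v0 + 2 * cmod v1) / (sqrt 2 * sqrt S)"
    using w_ge w_pos S_pos by (intro divide_left_mono) simp_all
  also have "\<dots> = sqrt 2 * exp (- (1/2) * t) * (cmod v0 + cmod v1 / sqrt S)"
    using S_pos by (simp add: field_simps mult.assoc[symmetric, of "sqrt 2" "sqrt 2"])
  finally show ?thesis
    by (simp add: S_def)
qed

lemma norm_vhat_le_powr:
  assumes "symb a b \<sigma> r \<ge> 1/2" and "t \<ge> 0" and "r > 0" and "K \<ge> 0"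
    and "r powr p \<le> K * sqrt (symb a b \<sigma> r)"
  shows "cmod (vhat a b \<sigma> r t v0 v1)
         \<le> sqrt 2 * (1 + K) * exp (- (1/2) * t) * (cmod v0 + r powr (- p) * cmod v1)"
proof -
  define S where "S = symb a b \<sigma> r"
  have sqrt_S_pos: "sqrt S > 0"
    using assms(1) by (simp add: S_def)
  have "1 / sqrt S = r powr p * r powr (- p) / sqrt S"
    using assms(3) by (simp add: powr_minus)
  also have "\<dots> \<le> K * sqrt S * r powr (- p) / sqrt S"
    using assms(5) sqrt_S_pos by (intro divide_right_mono mult_right_mono) (simp_all add: S_def)
  also have "\<dots> = K * r powr (- p)"
    using sqrt_S_pos by simp
  finally have inverse_le: "1 / sqrt S \<le> K * r powr (- p)" .
  have "cmod v1 / sqrt S \<le> K * r powr (- p) * cmod v1"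
    using mult_right_mono[OF inverse_le norm_ge_zero[of v1]] by simp
  moreover have "0 \<le> K * cmod v0" and "0 \<le> r powr (- p) * cmod v1"
    using assms(4) by simp_all
  ultimately have "cmod v0 + cmod v1 / sqrt S
      \<le> cmod v0 + r powr (- p) * cmod v1 + K * cmod v0 + K * r powr (- p) * cmod v1"
    by linarith
  also have "\<dots> = (1 + K) * (cmod v0 + r powr (- p) * cmod v1)"
    by (simp add: algebra_simps)
  finally have weights_le: "cmod v0 + cmod v1 / sqrt S \<le> (1 + K) * (cmod v0 + r powr (- p) * cmod v1)" .
  have "cmod (vhat a b \<sigma> r t v0 v1) \<le> sqrt 2 * exp (- (1/2) * t) * (cmod v0 + cmod v1 / sqrt S)"
    using norm_vhat_le[OF assms(1,2)] by (simp add: S_def)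
  also have "\<dots> \<le> sqrt 2 * exp (- (1/2) * t) * ((1 + K) * (cmod v0 + r powr (- p) * cmod v1))"
    using weights_le by (intro mult_left_mono) simp_all
  finally show ?thesis
    by (simp add: ac_simps)
qed

lemma sqrt_symb_ge_quadratic:
  assumes "a \<ge> 0" and "b \<ge> 0" and "r \<ge> 0"
  shows "sqrt a * r \<le> sqrt (symb a b \<sigma> r)"
proof -
  have "sqrt a * r = sqrt (a * r\<^sup>2)"
    using assms by (simp add: real_sqrt_mult)
  also have "\<dots> \<le> sqrt (symb a b \<sigma> r)"
    using assms(2) by (simp add: symb_def)
  finally show ?thesis .
qed

lemma sqrt_symb_ge_fractional:
  assumes "a \<ge> 0" and "b \<ge> 0"
  shows "sqrt b * r powr \<sigma> \<le> sqrt (symb a b \<sigma> r)"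
proof -
  have "r powr (2 * \<sigma>) = (r powr \<sigma>)\<^sup>2"
    by (metis mult_2 power2_eq_square powr_add)
  then have "sqrt b * r powr \<sigma> = sqrt (b * r powr (2 * \<sigma>))"
    by (simp add: real_sqrt_mult)
  also have "\<dots> \<le> sqrt (symb a b \<sigma> r)"
    using assms(1) by (simp add: symb_def)
  finally show ?thesis .
qed

lemma norm_vhat_le_high_frequency:
  assumes "a > 0" and "b > 0" and "r \<ge> 1 / sqrt a" and "t \<ge> 0"
  defines "C \<equiv> sqrt 2 * (1 + (1 / sqrt a + 1 / sqrt b))"
  shows "cmod (vhat a b \<sigma> r t v0 v1) \<le> C * exp (- (1/2) * t) * (cmod v0 + r powr (- 1) * cmod v1)"
    and "cmod (vhat a b \<sigma> r t v0 v1) \<le> C * exp (- (1/2) * t) * (cmod v0 + r powr (- \<sigma>) * cmod v1)"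
proof -
  define S where "S = symb a b \<sigma> r"
  define K where "K = 1 / sqrt a + 1 / sqrt b"
  have "1 / sqrt a > 0"
    using assms(1) by simp
  then have r_pos: "r > 0"
    using assms(3) by linarith
  have quadratic: "sqrt a * r \<le> sqrt S" and fractional: "sqrt b * r powr \<sigma> \<le> sqrt S"
    using sqrt_symb_ge_quadratic sqrt_symb_ge_fractional assms(1,2) r_pos by (simp_all add: S_def)
  have "1 \<le> sqrt a * r"
    using assms(1,3) by (simp add: field_simps)
  then have "1 \<le> sqrt S"
    using quadratic by linarith
  then have S_ge: "S \<ge> 1/2"
    by simp
  have powr_le: "r powr p \<le> K * sqrt S" if "sqrt k * r powr p \<le> sqrt S" and "1 / sqrt k \<le> K" and "k > 0"
    for k p
  proof -
    have "r powr p \<le> 1 / sqrt k * sqrt S"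
      using that(1,3) by (simp add: field_simps)
    also have "\<dots> \<le> K * sqrt S"
      using that(2) S_ge by (intro mult_right_mono) simp_all
    finally show ?thesis .
  qed
  have K_nonneg: "K \<ge> 0"
    using assms(1,2) by (simp add: K_def)
  have "r powr 1 \<le> K * sqrt S"
    by (rule powr_le[of a]) (use quadratic assms(1,2) r_pos in \<open>simp_all add: K_def\<close>)
  from norm_vhat_le_powr[OF S_ge[unfolded S_def] assms(4) r_pos K_nonneg this[unfolded S_def]]
  show "cmod (vhat a b \<sigma> r t v0 v1) \<le> C * exp (- (1/2) * t) * (cmod v0 + r powr (- 1) * cmod v1)"
    unfolding C_def K_def .
  have "r powr \<sigma> \<le> K * sqrt S"
    by (rule powr_le[of b]) (use fractional assms(1,2) in \<open>simp_all add: K_def\<close>)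
  from norm_vhat_le_powr[OF S_ge[unfolded S_def] assms(4) r_pos K_nonneg this[unfolded S_def]]
  show "cmod (vhat a b \<sigma> r t v0 v1) \<le> C * exp (- (1/2) * t) * (cmod v0 + r powr (- \<sigma>) * cmod v1)"
    unfolding C_def K_def .
qed

theorem proposition3p2:
  fixes a b \<sigma> :: real
  assumes "a > 0" and "b > 0" and "\<sigma> > 0" and "\<sigma> \<noteq> 1"
  shows "\<exists>N0 > 0. \<exists>c > 0. \<exists>C > 0.
           \<forall>(\<xi> :: 'n :: euclidean_space) (t :: real) (v0 :: complex) (v1 :: complex).
             t \<ge> 0 \<and> norm \<xi> \<ge> N0 \<longrightarrow>
             (\<sigma> < 1 \<longrightarrow> cmod (vhat a b \<sigma> (norm \<xi>) t v0 v1)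
                \<le> C * exp (- c * t) * (cmod v0 + norm \<xi> powr (-1) * cmod v1)) \<and>
             (\<sigma> > 1 \<longrightarrow> cmod (vhat a b \<sigma> (norm \<xi>) t v0 v1)
                \<le> C * exp (- c * t) * (cmod v0 + norm \<xi> powr (- \<sigma>) * cmod v1))"
proof -
  define C where "C = sqrt 2 * (1 + (1 / sqrt a + 1 / sqrt b))"
  have N0_pos: "1 / sqrt a > 0" and C_pos: "C > 0"
    using assms(1,2) by (simp_all add: C_def add_pos_nonneg)
  show ?thesis
    apply (rule exI[where x = "1 / sqrt a"], rule conjI[OF N0_pos])
    apply (rule exI[where x = "1 / 2"], rule conjI, simp)
    apply (rule exI[where x = C], rule conjI[OF C_pos])
    using norm_vhat_le_high_frequency[OF assms(1,2), folded C_def] by blast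
qed

end
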